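(* Let $G$ be the $m\times n$ grid with $m,n\ge 2$, and let $X\subseteq V$ contain $t_1=(1,z_1)$ and $t_2=(m,z_2)$ with $1\le z_1<z_2\le n$. Suppose that for every pair of vertices $(a_1,b_1),(a_2,b_2)$ with $a_1<a_2$, $a_1+b_1=a_2+b_2$ and $z_1\le b_2<b_1\le z_2$, some vertex of $X$ separates $(a_1,b_1)$ and $(a_2,b_2)$. Then $X$ is a landmark set of $G$.
   Context: The $m\times n$ grid $G$ has vertex set $V=\{(i,j):1\le i\le m,\ 1\le j\le n\}$, with $(i_1,j_1),(i_2,j_2)$ adjacent iff $|i_1-i_2|+|j_1-j_2|=1$; thus $d((i_1,j_1),(i_2,j_2))=|i_1-i_2|+|j_1-j_2|$. A vertex $x$ separates $u,v$ if $d(x,u)\neq d(x,v)$. A landmark set is $L\subseteq V$ such that every pair of distinct vertices is separated by some vertex of $L$. *)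

theory Defs
  imports Main
begin

definition grid_V :: "nat \<Rightarrow> nat \<Rightarrow> (nat \<times> nat) set" where
  "grid_V m n = {(i, j). 1 \<le> i \<and> i \<le> m \<and> 1 \<le> j \<and> j \<le> n}"

definition grid_dist :: "nat \<times> nat \<Rightarrow> nat \<times> nat \<Rightarrow> int" where
  "grid_dist u v = \<bar>int (fst u) - int (fst v)\<bar> + \<bar>int (snd u) - int (snd v)\<bar>"

definition separates :: "nat \<times> nat \<Rightarrow> nat \<times> nat \<Rightarrow> nat \<times> nat \<Rightarrow> bool" where
  "separates x u v \<longleftrightarrow> grid_dist x u \<noteq> grid_dist x v"

definition landmark_set :: "nat \<Rightarrow> nat \<Rightarrow> (nat \<times> nat) set \<Rightarrow> bool" where
  "landmark_set m n L \<longleftrightarrow> L \<subseteq> grid_V m n \<and>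
     (\<forall>u\<in>grid_V m n. \<forall>v\<in>grid_V m n. u \<noteq> v \<longrightarrow> (\<exists>x\<in>L. separates x u v))"

end

theory Submission
  imports Defs
begin

text \<open>
  For a vertex \<open>(a, b)\<close> the distances to the
  corners are \<open>a - 1 + |b - z\<^sub>1|\<close> and \<open>m - a + |b - z\<^sub>2|\<close>, so two distinct vertices with
  \<open>a\<^sub>1 \<le> a\<^sub>2\<close> that neither corner separates are of one of two kinds: both lie in the strip
  \<open>z\<^sub>1 \<le> b \<le> z\<^sub>2\<close> on a common antidiagonal, which is exactly the pair the hypothesis
  handles; or the upper one lies above the strip, the lower one below it, mirrored about
  its middle. In the second case clamping both vertices to the strip boundary yields a
  pair \<open>(a\<^sub>1, z\<^sub>2), (a\<^sub>2, z\<^sub>1)\<close> of the first kind, and every vertex separating the clamped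
  pair separates the original one.
\<close>

lemma separates_commute: "separates x u v \<longleftrightarrow> separates x v u"
  by (auto simp: separates_def)

lemma landmark_set_iff_ordered_pairs:
  "landmark_set m n L \<longleftrightarrow> L \<subseteq> grid_V m n \<and>
     (\<forall>u\<in>grid_V m n. \<forall>v\<in>grid_V m n. u \<noteq> v \<longrightarrow> fst u \<le> fst v \<longrightarrow> (\<exists>x\<in>L. separates x u v))"
  unfolding landmark_set_def by (metis nle_le separates_commute)

lemma not_separated_by_corners:
  fixes a1 b1 a2 b2 z1 z2 :: nat
  assumes "z1 < z2" "1 \<le> a1" "a1 \<le> a2" "a2 \<le> m" "(a1, b1) \<noteq> (a2, b2)"
    and "\<not> separates (1, z1) (a1, b1) (a2, b2)" "\<not> separates (m, z2) (a1, b1) (a2, b2)"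
  shows "a1 < a2 \<and>
    (a1 + b1 = a2 + b2 \<and> z1 \<le> b2 \<and> b2 < b1 \<and> b1 \<le> z2 \<or>
     z2 < b1 \<and> b2 < z1 \<and> a1 + z2 = a2 + z1 \<and> b1 + b2 = z1 + z2)"
  using assms by (auto simp: separates_def grid_dist_def abs_if split: if_splits)

lemma separates_of_clamped_pair:
  fixes a1 b1 a2 b2 z1 z2 :: nat
  assumes "z2 < b1" "a1 + z2 = a2 + z1" "b1 + b2 = z1 + z2" "a1 < a2"
    and "separates x (a1, z2) (a2, z1)"
  shows "separates x (a1, b1) (a2, b2)"
  using assms by (cases x) (auto simp: separates_def grid_dist_def abs_if split: if_splits)

theorem mainTheorem11:
  fixes m n z1 z2 :: nat and X :: "(nat \<times> nat) set"
  assumes "m \<ge> 2" and "n \<ge> 2"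
    and "X \<subseteq> grid_V m n"
    and "(1, z1) \<in> X" and "(m, z2) \<in> X"
    and "1 \<le> z1" and "z1 < z2" and "z2 \<le> n"
    and "\<And>a1 b1 a2 b2. (a1, b1) \<in> grid_V m n \<Longrightarrow> (a2, b2) \<in> grid_V m n \<Longrightarrow>
           a1 < a2 \<Longrightarrow> a1 + b1 = a2 + b2 \<Longrightarrow> z1 \<le> b2 \<Longrightarrow> b2 < b1 \<Longrightarrow> b1 \<le> z2 \<Longrightarrow>
           \<exists>x\<in>X. separates x (a1, b1) (a2, b2)"
  shows "landmark_set m n X"
  unfolding landmark_set_iff_ordered_pairs
proof (intro conjI ballI impI)
  fix u v assume "u \<in> grid_V m n" "v \<in> grid_V m n" "u \<noteq> v" "fst u \<le> fst v"
  then obtain a1 b1 a2 b2 where uv: "u = (a1, b1)" "v = (a2, b2)"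
    "(a1, b1) \<in> grid_V m n" "(a2, b2) \<in> grid_V m n" "(a1, b1) \<noteq> (a2, b2)" "a1 \<le> a2"
    by (metis prod.collapse)
  show "\<exists>x\<in>X. separates x u v"
  proof (rule ccontr)
    assume none: "\<not> (\<exists>x\<in>X. separates x u v)"
    with assms(4,5) uv have "a1 < a2 \<and>
      (a1 + b1 = a2 + b2 \<and> z1 \<le> b2 \<and> b2 < b1 \<and> b1 \<le> z2 \<or>
       z2 < b1 \<and> b2 < z1 \<and> a1 + z2 = a2 + z1 \<and> b1 + b2 = z1 + z2)"
      by (intro not_separated_by_corners) (auto simp: grid_V_def assms(7))
    then show False
    proof (elim conjE disjE)
      assume "a1 < a2" "z2 < b1" "b2 < z1" "a1 + z2 = a2 + z1" "b1 + b2 = z1 + z2"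
      moreover have "(a1, z2) \<in> grid_V m n" "(a2, z1) \<in> grid_V m n"
        using uv assms(6-8) by (auto simp: grid_V_def)
      ultimately show False
        using assms(9)[of a1 z2 a2 z1] assms(7) none uv separates_of_clamped_pair by blast
    qed (use assms(9) none uv in blast)
  qed
qed (fact assms(3))

end
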